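(* Let $G$ be a finite abelian group, $M$ a finite category, and $V\in\mathrm{Fun}(M,\mathrm{Vect}_{\hat G})$ indecomposable. Then every endomorphism $V\to V$ (natural transformation) is either nilpotent or an isomorphism.
   Context: $\hat G=G\sqcup\{0\}$ with $0$ absorbing. $\mathrm{Vect}_{\hat G}$: objects are finite pointed sets with an action of $\hat G$ ($0v=0$, $g0=0$) such that $G$ acts freely on nonzero elements; morphisms $f$ satisfy $f(0)=0$, $f(gv)=gf(v)$, and $f(v_1)=f(v_2)\neq0\Rightarrow Gv_1=Gv_2$. Direct sum $V\oplus W$ is disjoint union with zeros identified; in $\mathrm{Fun}(M,\mathrm{Vect}_{\hat G})$ (functors and natural transformations), subobjects and direct sums are formed pointwise. A finite category has finitely many objects and morphisms. $V$ is indecomposable if $V\neq0$ and $V=V_1\oplus V_2$ (for subfunctors $V_1,V_2$) implies $V_1=0$ or $V_2=0$. A natural transformation $N:V\to V$ is nilpotent if $N^m$ is the zero transformation for some $m\in\mathbb N$. *)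

theory Defs
  imports "HOL-Algebra.Group"
begin

record ('o,'m) category =
  cat_ob   :: "'o set"
  cat_mor  :: "'m set"
  cat_dom  :: "'m \<Rightarrow> 'o"
  cat_cod  :: "'m \<Rightarrow> 'o"
  cat_id   :: "'o \<Rightarrow> 'm"
  cat_comp :: "'m \<Rightarrow> 'm \<Rightarrow> 'm"   (* cat_comp g f = g \<circ> f *)

definition is_category :: "('o,'m) category \<Rightarrow> bool" where
  "is_category M \<longleftrightarrow>
     (\<forall>f\<in>cat_mor M. cat_dom M f \<in> cat_ob M \<and> cat_cod M f \<in> cat_ob M) \<and>
     (\<forall>a\<in>cat_ob M. cat_id M a \<in> cat_mor M \<and> cat_dom M (cat_id M a) = a \<and> cat_cod M (cat_id M a) = a) \<and>
     (\<forall>f\<in>cat_mor M. \<forall>g\<in>cat_mor M. cat_cod M f = cat_dom M g \<longrightarrow>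
        cat_comp M g f \<in> cat_mor M \<and> cat_dom M (cat_comp M g f) = cat_dom M f \<and>
        cat_cod M (cat_comp M g f) = cat_cod M g) \<and>
     (\<forall>f\<in>cat_mor M. cat_comp M (cat_id M (cat_cod M f)) f = f \<and> cat_comp M f (cat_id M (cat_dom M f)) = f) \<and>
     (\<forall>f\<in>cat_mor M. \<forall>g\<in>cat_mor M. \<forall>h\<in>cat_mor M.
        cat_cod M f = cat_dom M g \<longrightarrow> cat_cod M g = cat_dom M h \<longrightarrow>
        cat_comp M h (cat_comp M g f) = cat_comp M (cat_comp M h g) f)"

definition finite_category :: "('o,'m) category \<Rightarrow> bool" where
  "finite_category M \<longleftrightarrow> is_category M \<and> finite (cat_ob M) \<and> finite (cat_mor M)"

text \<open>An object of Vect over G-hat: a finite set X with base point z (the element 0)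
  and an action of G; the absorbing element 0 of G-hat acts as the constant map to z.\<close>

definition vect_obj :: "('g,'b) monoid_scheme \<Rightarrow> 'x set \<Rightarrow> 'x \<Rightarrow> ('g \<Rightarrow> 'x \<Rightarrow> 'x) \<Rightarrow> bool" where
  "vect_obj G X z act \<longleftrightarrow>
     finite X \<and> z \<in> X \<and>
     (\<forall>g\<in>carrier G. \<forall>v\<in>X. act g v \<in> X) \<and>
     (\<forall>v\<in>X. act \<one>\<^bsub>G\<^esub> v = v) \<and>
     (\<forall>g\<in>carrier G. \<forall>h\<in>carrier G. \<forall>v\<in>X. act (g \<otimes>\<^bsub>G\<^esub> h) v = act g (act h v)) \<and>
     (\<forall>g\<in>carrier G. act g z = z) \<and>
     (\<forall>g\<in>carrier G. \<forall>v\<in>X. v \<noteq> z \<longrightarrow> act g v = v \<longrightarrow> g = \<one>\<^bsub>G\<^esub>)"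

definition vect_mor :: "('g,'b) monoid_scheme \<Rightarrow> 'x set \<Rightarrow> 'x \<Rightarrow> ('g \<Rightarrow> 'x \<Rightarrow> 'x)
    \<Rightarrow> 'x set \<Rightarrow> 'x \<Rightarrow> ('g \<Rightarrow> 'x \<Rightarrow> 'x) \<Rightarrow> ('x \<Rightarrow> 'x) \<Rightarrow> bool" where
  "vect_mor G X z act Y w act' f \<longleftrightarrow>
     (\<forall>v\<in>X. f v \<in> Y) \<and> f z = w \<and>
     (\<forall>g\<in>carrier G. \<forall>v\<in>X. f (act g v) = act' g (f v)) \<and>
     (\<forall>v1\<in>X. \<forall>v2\<in>X. f v1 = f v2 \<longrightarrow> f v1 \<noteq> w \<longrightarrow> (\<exists>g\<in>carrier G. v1 = act g v2))"

record ('o,'m,'g,'x) vfunctor =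
  vset  :: "'o \<Rightarrow> 'x set"
  vzero :: "'o \<Rightarrow> 'x"
  vact  :: "'o \<Rightarrow> 'g \<Rightarrow> 'x \<Rightarrow> 'x"
  vmap  :: "'m \<Rightarrow> 'x \<Rightarrow> 'x"

definition is_vfunctor :: "('g,'b) monoid_scheme \<Rightarrow> ('o,'m) category \<Rightarrow> ('o,'m,'g,'x) vfunctor \<Rightarrow> bool" where
  "is_vfunctor G M V \<longleftrightarrow>
     (\<forall>a\<in>cat_ob M. vect_obj G (vset V a) (vzero V a) (vact V a)) \<and>
     (\<forall>f\<in>cat_mor M. vect_mor G (vset V (cat_dom M f)) (vzero V (cat_dom M f)) (vact V (cat_dom M f))
                                  (vset V (cat_cod M f)) (vzero V (cat_cod M f)) (vact V (cat_cod M f))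
                                  (vmap V f)) \<and>
     (\<forall>a\<in>cat_ob M. \<forall>v\<in>vset V a. vmap V (cat_id M a) v = v) \<and>
     (\<forall>f\<in>cat_mor M. \<forall>g\<in>cat_mor M. cat_cod M f = cat_dom M g \<longrightarrow>
        (\<forall>v\<in>vset V (cat_dom M f). vmap V (cat_comp M g f) v = vmap V g (vmap V f v)))"

definition nat_endo :: "('g,'b) monoid_scheme \<Rightarrow> ('o,'m) category \<Rightarrow> ('o,'m,'g,'x) vfunctor
    \<Rightarrow> ('o \<Rightarrow> 'x \<Rightarrow> 'x) \<Rightarrow> bool" where
  "nat_endo G M V N \<longleftrightarrow>
     (\<forall>a\<in>cat_ob M. vect_mor G (vset V a) (vzero V a) (vact V a) (vset V a) (vzero V a) (vact V a) (N a)) \<and>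
     (\<forall>f\<in>cat_mor M. \<forall>v\<in>vset V (cat_dom M f).
        N (cat_cod M f) (vmap V f v) = vmap V f (N (cat_dom M f) v))"

definition nilpotent_endo :: "('o,'m) category \<Rightarrow> ('o,'m,'g,'x) vfunctor \<Rightarrow> ('o \<Rightarrow> 'x \<Rightarrow> 'x) \<Rightarrow> bool" where
  "nilpotent_endo M V N \<longleftrightarrow>
     (\<exists>m::nat. \<forall>a\<in>cat_ob M. \<forall>v\<in>vset V a. (N a ^^ m) v = vzero V a)"

definition iso_endo :: "('g,'b) monoid_scheme \<Rightarrow> ('o,'m) category \<Rightarrow> ('o,'m,'g,'x) vfunctor
    \<Rightarrow> ('o \<Rightarrow> 'x \<Rightarrow> 'x) \<Rightarrow> bool" where
  "iso_endo G M V N \<longleftrightarrow>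
     (\<exists>N'. nat_endo G M V N' \<and>
        (\<forall>a\<in>cat_ob M. \<forall>v\<in>vset V a. N' a (N a v) = v \<and> N a (N' a v) = v))"

definition subfunctor :: "('g,'b) monoid_scheme \<Rightarrow> ('o,'m) category \<Rightarrow> ('o,'m,'g,'x) vfunctor
    \<Rightarrow> ('o \<Rightarrow> 'x set) \<Rightarrow> bool" where
  "subfunctor G M V S \<longleftrightarrow>
     (\<forall>a\<in>cat_ob M. S a \<subseteq> vset V a \<and> vzero V a \<in> S a \<and>
        (\<forall>g\<in>carrier G. \<forall>v\<in>S a. vact V a g v \<in> S a)) \<and>
     (\<forall>f\<in>cat_mor M. \<forall>v\<in>S (cat_dom M f). vmap V f v \<in> S (cat_cod M f))"

definition zero_subfunctor :: "('o,'m) category \<Rightarrow> ('o,'m,'g,'x) vfunctor \<Rightarrow> ('o \<Rightarrow> 'x set) \<Rightarrow> bool" where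
  "zero_subfunctor M V S \<longleftrightarrow> (\<forall>a\<in>cat_ob M. S a = {vzero V a})"

definition is_direct_sum :: "('o,'m) category \<Rightarrow> ('o,'m,'g,'x) vfunctor
    \<Rightarrow> ('o \<Rightarrow> 'x set) \<Rightarrow> ('o \<Rightarrow> 'x set) \<Rightarrow> bool" where
  "is_direct_sum M V S1 S2 \<longleftrightarrow>
     (\<forall>a\<in>cat_ob M. vset V a = S1 a \<union> S2 a \<and> S1 a \<inter> S2 a = {vzero V a})"

definition indecomposable :: "('g,'b) monoid_scheme \<Rightarrow> ('o,'m) category \<Rightarrow> ('o,'m,'g,'x) vfunctor \<Rightarrow> bool" where
  "indecomposable G M V \<longleftrightarrow>
     \<not> zero_subfunctor M V (vset V) \<and>
     (\<forall>S1 S2. subfunctor G M V S1 \<longrightarrow> subfunctor G M V S2 \<longrightarrow> is_direct_sum M V S1 S2 \<longrightarrow>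
        zero_subfunctor M V S1 \<or> zero_subfunctor M V S2)"

end

theory Submission
  imports Defs
begin

text \<open>This is Fitting's lemma. Because \<open>G\<close> acts freely, each component \<open>N a\<close> of an
  endomorphism is injective away from \<open>0\<close>; on the finite set \<open>V a\<close> every point is therefore
  either periodic under \<open>N a\<close> or eventually sent to \<open>0\<close>. The periodic points and the
  eventually vanishing points form two subfunctors whose direct sum is \<open>V\<close>, so by
  indecomposability one of them is zero: then either \<open>N\<close> is nilpotent (with a uniform exponent,
  as \<open>M\<close> and all \<open>V a\<close> are finite) or every component is a bijection, and the inverse
  components form a natural inverse.\<close>

lemma funpow_closed:
  assumes "f ` X \<subseteq> X" "v \<in> X"
  shows "(f ^^ k) v \<in> X"
  using assms by (induction k) auto

lemma funpow_commute_on: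
  assumes "f ` X \<subseteq> X" "\<forall>v\<in>X. h (f v) = f' (h v)" "v \<in> X"
  shows "h ((f ^^ k) v) = (f' ^^ k) (h v)"
  using assms by (induction k) (auto simp: funpow_closed)

lemma funpow_fixed_point: "f z = z \<Longrightarrow> (f ^^ k) z = z"
  by (induction k) auto

lemma funpow_stays_fixed:
  assumes "f z = z" "(f ^^ m) v = z" "m \<le> k"
  shows "(f ^^ k) v = z"
proof -
  have "(f ^^ k) v = (f ^^ (k - m)) ((f ^^ m) v)"
    using assms(3) by (metis funpow_add le_add_diff_inverse2 o_apply)
  with assms(1,2) show ?thesis by (simp add: funpow_fixed_point)
qed

lemma inv_into_commute:
  assumes "bij_betw f X X" "bij_betw f' Y Y" "h ` X \<subseteq> Y"
    and "\<forall>v\<in>X. h (f v) = f' (h v)" "v \<in> X"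
  shows "inv_into Y f' (h v) = h (inv_into X f v)"
proof -
  have "inv_into X f v \<in> X" "f (inv_into X f v) = v"
    using assms(1,5) by (auto simp: bij_betw_def inv_into_into f_inv_into_f)
  then have "h v = f' (h (inv_into X f v))" using assms(4) by metis
  then show ?thesis
    using assms(2,3) \<open>inv_into X f v \<in> X\<close> by (auto simp: bij_betw_def)
qed

definition periodic_part :: "('a \<Rightarrow> 'a) \<Rightarrow> 'a set \<Rightarrow> 'a set" where
  "periodic_part f X = {v \<in> X. \<exists>p>0. (f ^^ p) v = v}"

definition nilpotent_part :: "('a \<Rightarrow> 'a) \<Rightarrow> 'a \<Rightarrow> 'a set \<Rightarrow> 'a set" where
  "nilpotent_part f z X = {v \<in> X. \<exists>m. (f ^^ m) v = z}"

lemma periodic_part_commute: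
  assumes "f ` X \<subseteq> X" "h ` X \<subseteq> Y" "\<forall>v\<in>X. h (f v) = f' (h v)"
    and "v \<in> periodic_part f X"
  shows "h v \<in> periodic_part f' Y"
proof -
  obtain p where "p > 0" "(f ^^ p) v = v" "v \<in> X"
    using assms(4) unfolding periodic_part_def by blast
  then show ?thesis
    using assms(1-3) funpow_commute_on[of f X h f' v p] unfolding periodic_part_def by auto
qed

lemma nilpotent_part_commute:
  assumes "f ` X \<subseteq> X" "h ` X \<subseteq> Y" "\<forall>v\<in>X. h (f v) = f' (h v)" "h z = z'"
    and "v \<in> nilpotent_part f z X"
  shows "h v \<in> nilpotent_part f' z' Y"
proof -
  obtain m where "(f ^^ m) v = z" "v \<in> X"
    using assms(5) unfolding nilpotent_part_def by blast
  then show ?thesis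
    using assms(1-4) funpow_commute_on[of f X h f' v m] unfolding nilpotent_part_def by auto
qed

lemma periodic_part_Int_nilpotent_part:
  assumes "f z = z" "z \<in> X"
  shows "periodic_part f X \<inter> nilpotent_part f z X = {z}"
proof
  show "{z} \<subseteq> periodic_part f X \<inter> nilpotent_part f z X"
    using assms funpow_fixed_point[of f z 1] unfolding periodic_part_def nilpotent_part_def
    by (auto intro: exI[where x = 0])
  show "periodic_part f X \<inter> nilpotent_part f z X \<subseteq> {z}"
  proof
    fix v assume "v \<in> periodic_part f X \<inter> nilpotent_part f z X"
    then obtain p m where p: "p > 0" "(f ^^ p) v = v" and m: "(f ^^ m) v = z"
      unfolding periodic_part_def nilpotent_part_def by blast
    have "(f ^^ (p * m)) v = v"
      using funpow_fixed_point[of "f ^^ p" v m] p(2) by (simp add: funpow_mult)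
    moreover have "(f ^^ (p * m)) v = z"
      using funpow_stays_fixed[OF assms(1) m] p(1) by simp
    ultimately show "v \<in> {z}" by simp
  qed
qed

locale finite_pointed_inj_endo =
  fixes X :: "'a set" and z :: 'a and f :: "'a \<Rightarrow> 'a"
  assumes finite_X: "finite X" and zero_in: "z \<in> X"
    and maps_to: "f ` X \<subseteq> X" and fixes_zero: "f z = z"
    and inj_off_zero: "\<lbrakk>v1 \<in> X; v2 \<in> X; f v1 = f v2; f v1 \<noteq> z\<rbrakk> \<Longrightarrow> v1 = v2"
begin

lemma periodic_Int_nilpotent: "periodic_part f X \<inter> nilpotent_part f z X = {z}"
  using fixes_zero zero_in by (rule periodic_part_Int_nilpotent_part)

lemma funpow_cancel:
  assumes "v \<in> X" "(f ^^ i) v = (f ^^ (i + d)) v" "(f ^^ i) v \<noteq> z"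
  shows "(f ^^ d) v = v"
  using assms(2,3)
proof (induction i)
  case (Suc i)
  have in_X: "(f ^^ i) v \<in> X" "(f ^^ (i + d)) v \<in> X"
    using funpow_closed[OF maps_to assms(1)] by auto
  have "f ((f ^^ i) v) = f ((f ^^ (i + d)) v)" "f ((f ^^ i) v) \<noteq> z"
    using Suc.prems by simp_all
  then have "(f ^^ i) v = (f ^^ (i + d)) v"
    using in_X inj_off_zero by blast
  moreover have "(f ^^ i) v \<noteq> z"
    using \<open>f ((f ^^ i) v) \<noteq> z\<close> fixes_zero by auto
  ultimately show ?case by (rule Suc.IH)
qed simp

lemma periodic_or_nilpotent:
  assumes "v \<in> X"
  shows "v \<in> periodic_part f X \<union> nilpotent_part f z X"
proof -
  let ?orbit = "\<lambda>i. (f ^^ i) v"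
  have "?orbit ` {0..card X} \<subseteq> X" using funpow_closed[OF maps_to assms] by auto
  moreover have "card X < card {0..card X}" by simp
  ultimately have "\<not> inj_on ?orbit {0..card X}"
    using finite_X by (meson card_inj_on_le not_le)
  then obtain i j where ij: "i < j" "?orbit i = ?orbit j"
    unfolding inj_on_def by (metis linorder_neqE_nat)
  show ?thesis
  proof (cases "?orbit i = z")
    case False
    with ij have "(f ^^ (j - i)) v = v"
      by (intro funpow_cancel[OF assms, of i]) simp_all
    moreover have "j - i > 0" using ij by simp
    ultimately show ?thesis using assms unfolding periodic_part_def by blast
  qed (use assms in \<open>auto simp: nilpotent_part_def\<close>)
qed

lemma periodic_Un_nilpotent: "periodic_part f X \<union> nilpotent_part f z X = X"
  using periodic_or_nilpotent by (auto simp: periodic_part_def nilpotent_part_def)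

lemma bij_betw_if_periodic:
  assumes "X \<subseteq> periodic_part f X"
  shows "bij_betw f X X"
proof -
  have "X \<subseteq> f ` X"
  proof
    fix v assume v: "v \<in> X"
    then obtain p where "p > 0" "(f ^^ p) v = v"
      using assms unfolding periodic_part_def by blast
    then have "v = f ((f ^^ (p - 1)) v)"
      by (metis Suc_diff_1 funpow.simps(2) o_apply)
    then show "v \<in> f ` X" using funpow_closed[OF maps_to v] by blast
  qed
  then show ?thesis
    using finite_X maps_to finite_surj_inj unfolding bij_betw_def by blast
qed

end

lemma vect_mor_inj_off_zero:
  assumes "vect_obj G X z act" "vect_obj G Y w act'" "vect_mor G X z act Y w act' f"
    and "v1 \<in> X" "v2 \<in> X" "f v1 = f v2" "f v1 \<noteq> w"
  shows "v1 = v2"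
proof -
  from assms(3-7) obtain g where g: "g \<in> carrier G" "v1 = act g v2"
    unfolding vect_mor_def by blast
  with assms(3,5,6) have "act' g (f v1) = f v1" "f v1 \<in> Y"
    unfolding vect_mor_def by auto
  with assms(2,7) g have "g = \<one>\<^bsub>G\<^esub>" unfolding vect_obj_def by blast
  with g assms(1,5) show ?thesis unfolding vect_obj_def by auto
qed

lemma vect_mor_inv_into:
  assumes "monoid G" "vect_obj G X z act" "vect_mor G X z act X z act f" "bij_betw f X X"
  shows "vect_mor G X z act X z act (inv_into X f)"
  unfolding vect_mor_def
proof (intro conjI ballI impI)
  have obj: "z \<in> X" "\<forall>g\<in>carrier G. act g ` X \<subseteq> X" "\<forall>v\<in>X. act \<one>\<^bsub>G\<^esub> v = v"
    using assms(2) unfolding vect_obj_def by auto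
  have mor: "f z = z" "\<forall>g\<in>carrier G. \<forall>v\<in>X. act g (f v) = f (act g v)"
    using assms(3) unfolding vect_mor_def by auto
  show "inv_into X f v \<in> X" if "v \<in> X" for v
    using assms(4) that by (auto simp: bij_betw_def inv_into_into)
  show "inv_into X f z = z"
    using assms(4) obj(1) mor(1) by (metis bij_betw_inv_into_left)
  show "inv_into X f (act g v) = act g (inv_into X f v)" if "g \<in> carrier G" "v \<in> X" for g v
    using assms(4) assms(4) obj(2) mor(2) that by (intro inv_into_commute) auto
  show "\<exists>g\<in>carrier G. v1 = act g v2"
    if "v1 \<in> X" "v2 \<in> X" "inv_into X f v1 = inv_into X f v2" for v1 v2
    using that assms(1,4) obj(3) by (metis bij_betw_inv_into_right monoid.one_closed)
qed

definition periodic_subfunctor :: "('o,'m,'g,'x) vfunctor \<Rightarrow> ('o \<Rightarrow> 'x \<Rightarrow> 'x) \<Rightarrow> 'o \<Rightarrow> 'x set" where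
  "periodic_subfunctor V N a = periodic_part (N a) (vset V a)"

definition nilpotent_subfunctor :: "('o,'m,'g,'x) vfunctor \<Rightarrow> ('o \<Rightarrow> 'x \<Rightarrow> 'x) \<Rightarrow> 'o \<Rightarrow> 'x set" where
  "nilpotent_subfunctor V N a = nilpotent_part (N a) (vzero V a) (vset V a)"

lemma finite_pointed_inj_endo_component:
  assumes "is_vfunctor G M V" "nat_endo G M V N" "a \<in> cat_ob M"
  shows "finite_pointed_inj_endo (vset V a) (vzero V a) (N a)"
proof -
  have obj: "vect_obj G (vset V a) (vzero V a) (vact V a)"
    using assms(1,3) unfolding is_vfunctor_def by blast
  have mor: "vect_mor G (vset V a) (vzero V a) (vact V a) (vset V a) (vzero V a) (vact V a) (N a)"
    using assms(2,3) unfolding nat_endo_def by blast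
  show ?thesis
  proof
    show "finite (vset V a)" "vzero V a \<in> vset V a"
      using obj unfolding vect_obj_def by auto
    show "N a ` vset V a \<subseteq> vset V a" "N a (vzero V a) = vzero V a"
      using mor unfolding vect_mor_def by auto
  qed (rule vect_mor_inj_off_zero[OF obj obj mor])
qed

lemma nat_endo_commutes_with_action:
  assumes "is_vfunctor G M V" "nat_endo G M V N" "a \<in> cat_ob M" "g \<in> carrier G"
  shows "vact V a g ` vset V a \<subseteq> vset V a"
    and "\<forall>v\<in>vset V a. vact V a g (N a v) = N a (vact V a g v)"
    and "vact V a g (vzero V a) = vzero V a"
proof -
  have "vect_obj G (vset V a) (vzero V a) (vact V a)"
    using assms(1,3) unfolding is_vfunctor_def by blast
  then show "vact V a g ` vset V a \<subseteq> vset V a" "vact V a g (vzero V a) = vzero V a"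
    using assms(4) unfolding vect_obj_def by auto
  have "vect_mor G (vset V a) (vzero V a) (vact V a) (vset V a) (vzero V a) (vact V a) (N a)"
    using assms(2,3) unfolding nat_endo_def by blast
  then show "\<forall>v\<in>vset V a. vact V a g (N a v) = N a (vact V a g v)"
    using assms(4) unfolding vect_mor_def by auto
qed

lemma nat_endo_commutes_with_vmap:
  assumes "is_vfunctor G M V" "nat_endo G M V N" "f \<in> cat_mor M"
  shows "vmap V f ` vset V (cat_dom M f) \<subseteq> vset V (cat_cod M f)"
    and "\<forall>v\<in>vset V (cat_dom M f). vmap V f (N (cat_dom M f) v) = N (cat_cod M f) (vmap V f v)"
    and "vmap V f (vzero V (cat_dom M f)) = vzero V (cat_cod M f)"
proof -
  have "vect_mor G (vset V (cat_dom M f)) (vzero V (cat_dom M f)) (vact V (cat_dom M f))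
      (vset V (cat_cod M f)) (vzero V (cat_cod M f)) (vact V (cat_cod M f)) (vmap V f)"
    using assms(1,3) unfolding is_vfunctor_def by blast
  then show "vmap V f ` vset V (cat_dom M f) \<subseteq> vset V (cat_cod M f)"
      "vmap V f (vzero V (cat_dom M f)) = vzero V (cat_cod M f)"
    unfolding vect_mor_def by auto
  show "\<forall>v\<in>vset V (cat_dom M f). vmap V f (N (cat_dom M f) v) = N (cat_cod M f) (vmap V f v)"
    using assms(2,3) unfolding nat_endo_def by simp
qed

lemma iso_endo_if_bij_betw:
  assumes "monoid G" "is_category M" "is_vfunctor G M V" "nat_endo G M V N"
    and bij: "\<forall>a\<in>cat_ob M. bij_betw (N a) (vset V a) (vset V a)"
  shows "iso_endo G M V N"
proof -
  define N' where "N' a = inv_into (vset V a) (N a)" for a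
  have "nat_endo G M V N'"
    unfolding nat_endo_def
  proof (intro conjI ballI)
    fix a assume "a \<in> cat_ob M"
    with assms(3,4) bij show "vect_mor G (vset V a) (vzero V a) (vact V a) (vset V a) (vzero V a) (vact V a) (N' a)"
      unfolding N'_def is_vfunctor_def nat_endo_def by (blast intro: vect_mor_inv_into[OF assms(1)])
  next
    fix f v assume f: "f \<in> cat_mor M" and "v \<in> vset V (cat_dom M f)"
    moreover have "cat_dom M f \<in> cat_ob M" "cat_cod M f \<in> cat_ob M"
      using assms(2) f unfolding is_category_def by blast+
    ultimately show "N' (cat_cod M f) (vmap V f v) = vmap V f (N' (cat_dom M f) v)"
      unfolding N'_def using bij nat_endo_commutes_with_vmap(1,2)[OF assms(3,4) f]
      by (intro inv_into_commute) auto
  qed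
  moreover have "N' a (N a v) = v \<and> N a (N' a v) = v" if "a \<in> cat_ob M" "v \<in> vset V a" for a v
    using bij that unfolding N'_def by (meson bij_betw_inv_into_left bij_betw_inv_into_right)
  ultimately show ?thesis unfolding iso_endo_def by blast
qed

lemma subfunctor_periodic_subfunctor:
  assumes "is_category M" "is_vfunctor G M V" "nat_endo G M V N"
  shows "subfunctor G M V (periodic_subfunctor V N)"
  unfolding subfunctor_def periodic_subfunctor_def
proof (intro conjI ballI)
  fix a assume a: "a \<in> cat_ob M"
  interpret finite_pointed_inj_endo "vset V a" "vzero V a" "N a"
    using assms(2,3) a by (rule finite_pointed_inj_endo_component)
  show "periodic_part (N a) (vset V a) \<subseteq> vset V a"
    by (auto simp: periodic_part_def)
  show "vzero V a \<in> periodic_part (N a) (vset V a)"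
    using periodic_Int_nilpotent by blast
  show "vact V a g v \<in> periodic_part (N a) (vset V a)"
    if "g \<in> carrier G" "v \<in> periodic_part (N a) (vset V a)" for g v
    using maps_to nat_endo_commutes_with_action(1,2)[OF assms(2,3) a that(1)] that(2)
    by (rule periodic_part_commute)
next
  fix f v
  assume f: "f \<in> cat_mor M" and v: "v \<in> periodic_part (N (cat_dom M f)) (vset V (cat_dom M f))"
  have dom_in: "cat_dom M f \<in> cat_ob M"
    using assms(1) f unfolding is_category_def by blast
  interpret dom: finite_pointed_inj_endo "vset V (cat_dom M f)" "vzero V (cat_dom M f)" "N (cat_dom M f)"
    using assms(2,3) dom_in by (rule finite_pointed_inj_endo_component)
  show "vmap V f v \<in> periodic_part (N (cat_cod M f)) (vset V (cat_cod M f))"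
    using dom.maps_to nat_endo_commutes_with_vmap(1,2)[OF assms(2,3) f] v by (rule periodic_part_commute)
qed

lemma subfunctor_nilpotent_subfunctor:
  assumes "is_category M" "is_vfunctor G M V" "nat_endo G M V N"
  shows "subfunctor G M V (nilpotent_subfunctor V N)"
  unfolding subfunctor_def nilpotent_subfunctor_def
proof (intro conjI ballI)
  fix a assume a: "a \<in> cat_ob M"
  interpret finite_pointed_inj_endo "vset V a" "vzero V a" "N a"
    using assms(2,3) a by (rule finite_pointed_inj_endo_component)
  show "nilpotent_part (N a) (vzero V a) (vset V a) \<subseteq> vset V a"
    by (auto simp: nilpotent_part_def)
  show "vzero V a \<in> nilpotent_part (N a) (vzero V a) (vset V a)"
    using periodic_Int_nilpotent by blast
  show "vact V a g v \<in> nilpotent_part (N a) (vzero V a) (vset V a)"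
    if "g \<in> carrier G" "v \<in> nilpotent_part (N a) (vzero V a) (vset V a)" for g v
    using maps_to nat_endo_commutes_with_action[OF assms(2,3) a that(1)] that(2)
    by (rule nilpotent_part_commute)
next
  fix f v
  assume f: "f \<in> cat_mor M"
    and v: "v \<in> nilpotent_part (N (cat_dom M f)) (vzero V (cat_dom M f)) (vset V (cat_dom M f))"
  have dom_in: "cat_dom M f \<in> cat_ob M"
    using assms(1) f unfolding is_category_def by blast
  interpret dom: finite_pointed_inj_endo "vset V (cat_dom M f)" "vzero V (cat_dom M f)" "N (cat_dom M f)"
    using assms(2,3) dom_in by (rule finite_pointed_inj_endo_component)
  show "vmap V f v \<in> nilpotent_part (N (cat_cod M f)) (vzero V (cat_cod M f)) (vset V (cat_cod M f))"
    using dom.maps_to nat_endo_commutes_with_vmap[OF assms(2,3) f] v by (rule nilpotent_part_commute)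
qed

lemma direct_sum_periodic_nilpotent:
  assumes "is_vfunctor G M V" "nat_endo G M V N"
  shows "is_direct_sum M V (periodic_subfunctor V N) (nilpotent_subfunctor V N)"
  unfolding is_direct_sum_def periodic_subfunctor_def nilpotent_subfunctor_def
proof (intro ballI conjI)
  fix a assume a: "a \<in> cat_ob M"
  interpret finite_pointed_inj_endo "vset V a" "vzero V a" "N a"
    using assms a by (rule finite_pointed_inj_endo_component)
  show "vset V a = periodic_part (N a) (vset V a) \<union> nilpotent_part (N a) (vzero V a) (vset V a)"
    using periodic_Un_nilpotent by blast
  show "periodic_part (N a) (vset V a) \<inter> nilpotent_part (N a) (vzero V a) (vset V a) = {vzero V a}"
    using periodic_Int_nilpotent .
qed

lemma nilpotent_endo_if_periodic_subfunctor_zero: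
  assumes "finite_category M" "is_vfunctor G M V" "nat_endo G M V N"
    and "zero_subfunctor M V (periodic_subfunctor V N)"
  shows "nilpotent_endo M V N"
proof -
  have "\<forall>\<^sub>F k in sequentially. (N a ^^ k) v = vzero V a" if a: "a \<in> cat_ob M" and v: "v \<in> vset V a" for a v
  proof -
    interpret finite_pointed_inj_endo "vset V a" "vzero V a" "N a"
      using assms(2,3) a by (rule finite_pointed_inj_endo_component)
    have "periodic_part (N a) (vset V a) = {vzero V a}"
      using assms(4) a unfolding zero_subfunctor_def periodic_subfunctor_def by blast
    then have "v \<in> nilpotent_part (N a) (vzero V a) (vset V a)"
      using periodic_Un_nilpotent periodic_Int_nilpotent v by blast
    then show ?thesis
      unfolding nilpotent_part_def eventually_sequentially
      using funpow_stays_fixed[of "N a", OF fixes_zero] by blast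
  qed
  moreover have "finite (Sigma (cat_ob M) (vset V))"
    using assms(1) finite_pointed_inj_endo.finite_X[OF finite_pointed_inj_endo_component[OF assms(2,3)]]
    unfolding finite_category_def by blast
  ultimately have "\<forall>\<^sub>F k in sequentially. \<forall>(a, v)\<in>Sigma (cat_ob M) (vset V). (N a ^^ k) v = vzero V a"
    by (intro eventually_ball_finite) auto
  then show ?thesis
    unfolding nilpotent_endo_def eventually_sequentially by blast
qed

lemma iso_endo_if_nilpotent_subfunctor_zero:
  assumes "monoid G" "is_category M" "is_vfunctor G M V" "nat_endo G M V N"
    and "zero_subfunctor M V (nilpotent_subfunctor V N)"
  shows "iso_endo G M V N"
proof (rule iso_endo_if_bij_betw[OF assms(1-4)], intro ballI)
  fix a assume a: "a \<in> cat_ob M"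
  interpret finite_pointed_inj_endo "vset V a" "vzero V a" "N a"
    using assms(3,4) a by (rule finite_pointed_inj_endo_component)
  have "nilpotent_part (N a) (vzero V a) (vset V a) = {vzero V a}"
    using assms(5) a unfolding zero_subfunctor_def nilpotent_subfunctor_def by blast
  then have "vset V a \<subseteq> periodic_part (N a) (vset V a)"
    using periodic_Un_nilpotent periodic_Int_nilpotent by blast
  then show "bij_betw (N a) (vset V a) (vset V a)"
    by (rule bij_betw_if_periodic)
qed

theorem mainTheorem5:
  fixes G :: "('g,'b) monoid_scheme" and M :: "('o,'m) category"
    and V :: "('o,'m,'g,'x) vfunctor" and N :: "'o \<Rightarrow> 'x \<Rightarrow> 'x"
  assumes "comm_group G" and "finite (carrier G)"
    and "finite_category M"
    and "is_vfunctor G M V"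
    and "indecomposable G M V"
    and "nat_endo G M V N"
  shows "nilpotent_endo M V N \<or> iso_endo G M V N"
proof -
  have "monoid G" using assms(1) by (simp add: comm_group.axioms(2) group.is_monoid)
  moreover have cat: "is_category M" using assms(3) by (simp add: finite_category_def)
  moreover have "zero_subfunctor M V (periodic_subfunctor V N) \<or> zero_subfunctor M V (nilpotent_subfunctor V N)"
    using assms(5) subfunctor_periodic_subfunctor[OF cat assms(4,6)]
      subfunctor_nilpotent_subfunctor[OF cat assms(4,6)] direct_sum_periodic_nilpotent[OF assms(4,6)]
    unfolding indecomposable_def by blast
  ultimately show ?thesis
    using nilpotent_endo_if_periodic_subfunctor_zero[OF assms(3,4,6)]
      iso_endo_if_nilpotent_subfunctor_zero[OF _ cat assms(4,6)] by blast
qed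

end
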